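(* Let $d\ge2$ and let $\mathbb{Q}$ be a stationary Gibbs measure on $\Omega=\{0,1\}^{\mathbb{Z}^d}$. Then, if $\alpha<1/2$ and $\varepsilon>0$ is small enough, there exists $\nu>0$ such that for all $n\ge1$, $$\mathbb{Q}(\mathcal{G}_n(\varepsilon,\alpha))>1-e^{-\nu n^d},$$ where $\mathcal{G}_n(\varepsilon,\alpha)$ is identified with the set of configurations $\omega$ such that $\omega_{C_n}$ is $(\varepsilon,\alpha)$-good.
   Context: For finite $V\subseteq\mathbb{Z}^d$, $\Delta(V,\eta,\sigma)=\sum_{x\in V}|\eta_x-\sigma_x|$. $C_n=[0,n]^d\cap\mathbb{Z}^d$. An $n$-pattern is a map $A_n:C_n\to\{0,1\}$, and $[A_n]^\varepsilon=\{\omega\in\Omega:\Delta(C_n,\omega,A_n)\le\varepsilon|C_n|\}$. For $x\in\mathbb{Z}^d$, $\theta_x[A_n]^\varepsilon$ is the set of $\omega$ whose restriction to $C_n+x$, translated back to $C_n$, is within Hamming distance $\varepsilon|C_n|$ of $A_n$. For $0<\alpha<1$, $0\le\varepsilon<1$, $A_n$ is $(\varepsilon,\alpha)$-good if $[A_n]^\varepsilon\cap\theta_x[A_n]^\varepsilon=\emptyset$ for all $x\in\mathbb{Z}^d$ with $0<|x|\le\alpha n$ (sup-norm); $\mathcal{G}_n(\varepsilon,\alpha)$ is the set of such patterns. *)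

theory Defs
  imports "HOL-Probability.Probability"
begin

type_synonym 'd site = "int ^ 'd"
type_synonym 'd config = "'d site \<Rightarrow> bool"

text \<open>The measurable space Omega = {0,1}^(Z^d) with the product sigma-algebra
  (a configuration is a function from sites to bool; True = 1, False = 0).\<close>
definition Omega_space :: "('d::finite) config measure" where
  "Omega_space = PiM UNIV (\<lambda>_. count_space UNIV)"

definition supnorm :: "('d::finite) site \<Rightarrow> int" where
  "supnorm x = Max (range (\<lambda>i. \<bar>x $ i\<bar>))"

definition cube :: "nat \<Rightarrow> ('d::finite) site set" where
  "cube n = {x. \<forall>i. 0 \<le> x $ i \<and> x $ i \<le> int n}"

definition Delta :: "('d::finite) site set \<Rightarrow> 'd config \<Rightarrow> 'd config \<Rightarrow> real" where
  "Delta V \<eta> \<sigma> = (\<Sum>x\<in>V. \<bar>of_bool (\<eta> x) - of_bool (\<sigma> x)\<bar>)"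

text \<open>[A_n]^eps (the pattern A is a configuration of which only the values on C_n matter).\<close>
definition cyl :: "nat \<Rightarrow> real \<Rightarrow> ('d::finite) config \<Rightarrow> 'd config set" where
  "cyl n \<epsilon> A = {\<omega>. Delta (cube n) \<omega> A \<le> \<epsilon> * real (card (cube n :: 'd site set))}"

definition shifted_cyl :: "nat \<Rightarrow> real \<Rightarrow> ('d::finite) config \<Rightarrow> 'd site \<Rightarrow> 'd config set" where
  "shifted_cyl n \<epsilon> A x = {\<omega>. Delta (cube n) (\<lambda>y. \<omega> (y + x)) A \<le> \<epsilon> * real (card (cube n :: 'd site set))}"

definition good_pattern :: "nat \<Rightarrow> real \<Rightarrow> real \<Rightarrow> ('d::finite) config \<Rightarrow> bool" where
  "good_pattern n \<epsilon> \<alpha> A \<longleftrightarrow>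
     (\<forall>x::'d site. x \<noteq> 0 \<and> real_of_int (supnorm x) \<le> \<alpha> * real n \<longrightarrow>
        cyl n \<epsilon> A \<inter> shifted_cyl n \<epsilon> A x = {})"

definition good_set :: "nat \<Rightarrow> real \<Rightarrow> real \<Rightarrow> ('d::finite) config set" where
  "good_set n \<epsilon> \<alpha> = {\<omega>. good_pattern n \<epsilon> \<alpha> (\<lambda>y. if y \<in> cube n then \<omega> y else False)}"

definition ti_abs_summable_potential :: "(('d::finite) site set \<Rightarrow> 'd config \<Rightarrow> real) \<Rightarrow> bool" where
  "ti_abs_summable_potential \<Phi> \<longleftrightarrow>
     (\<forall>A \<omega> \<omega>'. finite A \<longrightarrow> (\<forall>x\<in>A. \<omega> x = \<omega>' x) \<longrightarrow> \<Phi> A \<omega> = \<Phi> A \<omega>') \<and>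
     (\<forall>A x \<omega>. finite A \<longrightarrow> \<Phi> ((\<lambda>y. y + x) ` A) \<omega> = \<Phi> A (\<lambda>y. \<omega> (y + x))) \<and>
     ((\<lambda>A. SUP \<omega>. \<bar>\<Phi> A \<omega>\<bar>) summable_on {A. finite A \<and> (0::'d site) \<in> A})"

definition hamiltonian :: "(('d::finite) site set \<Rightarrow> 'd config \<Rightarrow> real) \<Rightarrow> 'd site set \<Rightarrow> 'd config \<Rightarrow> real" where
  "hamiltonian \<Phi> \<Lambda> \<omega> = infsum (\<lambda>A. \<Phi> A \<omega>) {A. finite A \<and> A \<inter> \<Lambda> \<noteq> {}}"

definition splice :: "('d::finite) site set \<Rightarrow> 'd site set \<Rightarrow> 'd config \<Rightarrow> 'd config" where
  "splice \<Lambda> S \<omega> = (\<lambda>x. if x \<in> \<Lambda> then x \<in> S else \<omega> x)"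

definition gibbs_kernel :: "(('d::finite) site set \<Rightarrow> 'd config \<Rightarrow> real) \<Rightarrow> 'd site set \<Rightarrow> 'd site set \<Rightarrow> 'd config \<Rightarrow> real" where
  "gibbs_kernel \<Phi> \<Lambda> S \<omega> =
     exp (- hamiltonian \<Phi> \<Lambda> (splice \<Lambda> S \<omega>)) /
     (\<Sum>T\<in>Pow \<Lambda>. exp (- hamiltonian \<Phi> \<Lambda> (splice \<Lambda> T \<omega>)))"

definition is_gibbs_for :: "(('d::finite) site set \<Rightarrow> 'd config \<Rightarrow> real) \<Rightarrow> 'd config measure \<Rightarrow> bool" where
  "is_gibbs_for \<Phi> Q \<longleftrightarrow>
     prob_space Q \<and> sets Q = sets Omega_space \<and>
     (\<forall>\<Lambda> S B. finite \<Lambda> \<longrightarrow> S \<subseteq> \<Lambda> \<longrightarrow> B \<in> sets Q \<longrightarrow>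
        (\<forall>\<omega> \<omega>'. (\<forall>x. x \<notin> \<Lambda> \<longrightarrow> \<omega> x = \<omega>' x) \<longrightarrow> (\<omega> \<in> B \<longleftrightarrow> \<omega>' \<in> B)) \<longrightarrow>
        measure Q ({\<omega> \<in> space Q. \<forall>x\<in>\<Lambda>. \<omega> x = (x \<in> S)} \<inter> B) =
          (\<integral>\<omega>. indicator B \<omega> * gibbs_kernel \<Phi> \<Lambda> S \<omega> \<partial>Q))"

definition stationary :: "('d::finite) config measure \<Rightarrow> bool" where
  "stationary Q \<longleftrightarrow> (\<forall>x::'d site. distr Q Q (\<lambda>\<omega> y. \<omega> (y + x)) = Q)"

definition stationary_gibbs :: "('d::finite) config measure \<Rightarrow> bool" where
  "stationary_gibbs Q \<longleftrightarrow> stationary Q \<and>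
     (\<exists>\<Phi>. ti_abs_summable_potential \<Phi> \<and> is_gibbs_for \<Phi> Q)"

end

(*
  If the pattern of omega on C_n is not (eps, alpha)-good, there is a shift x with
  0 < |x| <= alpha n such that omega agrees with its translate by x on the overlap
  C_n \<inter> (C_n - x), which has at least |C_n| / 2^d sites since alpha < 1/2, except at
  2 eps |C_n| sites. Revealing the sites of the overlap one by one, each agreement costs a
  factor 1 - delta; summing over the exceptional sets and over the at most 2^d |C_n| shifts
  gives a bound 2^d |C_n| exp (-kappa |C_n|) once eps log (2 / delta) is small compared to
  kappa = delta / 2^(d+2). For the finitely many small n, the corner pattern is good and has
  probability at least delta^|C_n| > 0.
*)
theory Submission
  imports Defs
begin

section \<open>Lattice geometry\<close>

lemma vec_box_eq_image_PiE:
  "{x::('a, 'd::finite) vec. \<forall>i. x $ i \<in> S i} = vec_lambda ` PiE UNIV S"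
proof safe
  fix x :: "('a, 'd) vec"
  assume "\<forall>i. x $ i \<in> S i"
  then have "(\<lambda>i. x $ i) \<in> PiE UNIV S" by auto
  then show "x \<in> vec_lambda ` PiE UNIV S"
    by (rule rev_image_eqI) simp
qed auto

lemma
  assumes "\<And>i. finite (S i)"
  shows finite_vec_box: "finite {x::('a, 'd::finite) vec. \<forall>i. x $ i \<in> S i}"
    and card_vec_box: "card {x::('a, 'd::finite) vec. \<forall>i. x $ i \<in> S i} = (\<Prod>i\<in>UNIV. card (S i))"
proof -
  have "inj_on vec_lambda (PiE UNIV S)"
    by (rule inj_onI) (metis vec_lambda_inverse UNIV_I)
  then show "finite {x::('a, 'd) vec. \<forall>i. x $ i \<in> S i}"
    and "card {x::('a, 'd) vec. \<forall>i. x $ i \<in> S i} = (\<Prod>i\<in>UNIV. card (S i))"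
    using assms unfolding vec_box_eq_image_PiE by (simp_all add: finite_PiE card_image card_PiE)
qed

lemma cube_eq_vec_box: "cube n = {x::('d::finite) site. \<forall>i. x $ i \<in> {0..int n}}"
  unfolding cube_def by auto

lemma finite_cube: "finite (cube n :: ('d::finite) site set)"
  unfolding cube_eq_vec_box by (rule finite_vec_box) simp

lemma card_cube: "card (cube n :: ('d::finite) site set) = (n + 1) ^ CARD('d)"
proof -
  have "nat (int n + 1) = Suc n"
    by simp
  then show ?thesis
    unfolding cube_eq_vec_box by (subst card_vec_box) simp_all
qed

lemma supnorm_le_iff: "supnorm x \<le> c \<longleftrightarrow> (\<forall>i. \<bar>x $ i\<bar> \<le> c)"
  unfolding supnorm_def by (simp add: Max_le_iff)

lemma abs_le_supnorm: "\<bar>x $ i\<bar> \<le> supnorm x"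
  using supnorm_le_iff[of x "supnorm x"] by simp

lemma double_abs_le_if_supnorm_le:
  fixes \<alpha> :: real
  assumes "real_of_int (supnorm x) \<le> \<alpha> * real n" "\<alpha> \<le> 1/2"
  shows "2 * \<bar>x $ i\<bar> \<le> int n"
proof -
  have "\<alpha> * real n \<le> 1/2 * real n"
    using assms(2) by (intro mult_right_mono) auto
  then have "real_of_int (2 * \<bar>x $ i\<bar>) \<le> real_of_int (int n)"
    using abs_le_supnorm[of x i] assms(1) by linarith
  then show ?thesis
    by (simp only: of_int_le_iff)
qed

lemma
  shows finite_supnorm_le: "finite {x::('d::finite) site. supnorm x \<le> int n}"
    and card_supnorm_le: "card {x::('d::finite) site. supnorm x \<le> int n} = (2 * n + 1) ^ CARD('d)"
proof -
  have eq: "{x::'d site. supnorm x \<le> int n} = {x. \<forall>i. x $ i \<in> {- int n..int n}}"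
    unfolding supnorm_le_iff abs_le_iff by (auto simp: minus_le_iff)
  show "finite {x::'d site. supnorm x \<le> int n}"
    unfolding eq by (rule finite_vec_box) simp
  have "nat (2 * int n + 1) = 2 * n + 1"
    by simp
  then show "card {x::'d site. supnorm x \<le> int n} = (2 * n + 1) ^ CARD('d)"
    unfolding eq by (subst card_vec_box) simp_all
qed

definition cube_overlap :: "nat \<Rightarrow> ('d::finite) site \<Rightarrow> 'd site set" where
  "cube_overlap n x = {y \<in> cube n. y + x \<in> cube n}"

lemma cube_overlap_eq_vec_box:
  fixes x :: "('d::finite) site"
  shows "cube_overlap n x = {y. \<forall>i. y $ i \<in> {max 0 (- x $ i) .. min (int n) (int n - x $ i)}}"
proof (rule set_eqI)
  fix y :: "'d site"
  have "y \<in> cube_overlap n x \<longleftrightarrow>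
      (\<forall>i. 0 \<le> y $ i \<and> y $ i \<le> int n \<and> 0 \<le> y $ i + x $ i \<and> y $ i + x $ i \<le> int n)"
    unfolding cube_overlap_def cube_def by auto
  also have "\<dots> \<longleftrightarrow> (\<forall>i. y $ i \<in> {max 0 (- x $ i) .. min (int n) (int n - x $ i)})"
    by (intro all_cong1) (auto simp: max_def min_def)
  finally show "y \<in> cube_overlap n x \<longleftrightarrow> y \<in> {y. \<forall>i. y $ i \<in> {max 0 (- x $ i) .. min (int n) (int n - x $ i)}}"
    by simp
qed

lemma finite_cube_overlap: "finite (cube_overlap n x)"
  unfolding cube_overlap_eq_vec_box by (rule finite_vec_box) simp

lemma card_cube_overlap_ge:
  fixes x :: "('d::finite) site"
  assumes "\<And>i. 2 * \<bar>x $ i\<bar> \<le> int n"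
  shows "real (card (cube n :: 'd site set)) / 2 ^ CARD('d) \<le> real (card (cube_overlap n x))"
proof -
  have side: "(real n + 1) / 2 \<le> real (card {max 0 (- x $ i) .. min (int n) (int n - x $ i)})" for i
  proof -
    have "min (int n) (int n - x $ i) - max 0 (- x $ i) + 1 = int n + 1 - \<bar>x $ i\<bar>"
      by (auto simp: abs_if min_def max_def)
    then have "card {max 0 (- x $ i) .. min (int n) (int n - x $ i)} = nat (int n + 1 - \<bar>x $ i\<bar>)"
      by (simp only: card_atLeastAtMost_int)
    moreover have "int n + 1 \<le> 2 * (int n + 1 - \<bar>x $ i\<bar>)"
      using assms[of i] by arith
    then have "real_of_int (int n + 1) \<le> real_of_int (2 * (int n + 1 - \<bar>x $ i\<bar>))"
      by (simp only: of_int_le_iff)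
    ultimately show ?thesis
      using assms[of i] by simp
  qed
  have "real (card (cube n :: 'd site set)) / 2 ^ CARD('d) = (\<Prod>i\<in>(UNIV::'d set). (real n + 1) / 2)"
    by (simp add: card_cube power_divide add.commute)
  also have "\<dots> \<le> (\<Prod>i\<in>UNIV. real (card {max 0 (- x $ i) .. min (int n) (int n - x $ i)}))"
    using side by (intro prod_mono) simp
  also have "\<dots> = real (card (cube_overlap n x))"
    unfolding cube_overlap_eq_vec_box by (subst card_vec_box) simp_all
  finally show ?thesis .
qed

lemma ex_mem_diff_notin:
  fixes F :: "('d::finite) site set"
  assumes "finite F" "F \<noteq> {}" "x \<noteq> 0"
  shows "\<exists>y\<in>F. y - x \<notin> F"
proof -
  obtain i where i: "x $ i \<noteq> 0"
    using assms(3) by (metis vec_eq_iff zero_index)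
  define f where "f z = sgn (x $ i) * z $ i" for z :: "'d site"
  have "Min (f ` F) \<in> f ` F"
    using assms(1,2) by (intro Min_in) auto
  then obtain y where y: "y \<in> F" "f y = Min (f ` F)"
    by auto
  have "f (y - x) < f y"
    using i unfolding f_def by (simp add: algebra_simps) (auto simp: sgn_if)
  moreover have "f y \<le> f z" if "z \<in> F" for z
    using that y(2) assms(1) by simp
  ultimately show ?thesis
    using y(1) by force
qed

definition corner_config :: "nat \<Rightarrow> ('d::finite) config" where
  "corner_config n y \<longleftrightarrow> (\<forall>i. y $ i = 0 \<or> y $ i = int n)"

lemma corner_config_translate_mismatch:
  fixes x :: "('d::finite) site"
  assumes "x \<noteq> 0" "\<And>i. \<bar>x $ i\<bar> < int n"
  obtains c where "c \<in> cube n" "c - x \<in> cube n" "corner_config n c" "\<not> corner_config n (c - x)"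
proof -
  obtain j where j: "x $ j \<noteq> 0"
    using assms(1) by (metis vec_eq_iff zero_index)
  \<comment> \<open>the corner towards which \<open>x\<close> points\<close>
  define c :: "'d site" where "c = (\<chi> i. if 0 < x $ i then int n else 0)"
  have "c \<in> cube n" "corner_config n c"
    unfolding c_def cube_def corner_config_def by auto
  moreover have "0 \<le> (c - x) $ i \<and> (c - x) $ i \<le> int n" for i
    using assms(2)[of i] unfolding c_def by (auto simp: abs_less_iff)
  then have "c - x \<in> cube n"
    unfolding cube_def by blast
  moreover have "0 < (c - x) $ j" "(c - x) $ j < int n"
    using assms(2)[of j] j unfolding c_def by (auto simp: abs_less_iff)
  then have "\<not> corner_config n (c - x)"
    unfolding corner_config_def by (metis less_irrefl)
  ultimately show ?thesis
    using that by blast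
qed

section \<open>Hamming distance and good patterns\<close>

lemma Delta_eq_card:
  assumes "finite V"
  shows "Delta V \<eta> \<sigma> = real (card {y\<in>V. \<eta> y \<noteq> \<sigma> y})"
proof -
  have "Delta V \<eta> \<sigma> = (\<Sum>y\<in>V. of_bool (\<eta> y \<noteq> \<sigma> y))"
    unfolding Delta_def by (intro sum.cong) auto
  then show ?thesis
    using assms by (simp add: Int_def conj_commute)
qed

lemma Delta_less_one_imp_eq:
  assumes "finite V" "Delta V \<eta> \<sigma> < 1"
  shows "\<forall>y\<in>V. \<eta> y = \<sigma> y"
  using assms Delta_eq_card[OF assms(1), of \<eta> \<sigma>] by (auto simp: card_eq_0_iff)

definition nearly_periodic :: "nat \<Rightarrow> ('d::finite) site \<Rightarrow> real \<Rightarrow> 'd config set" where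
  "nearly_periodic n x M = {\<omega>. \<exists>E\<subseteq>cube_overlap n x. real (card E) \<le> M \<and>
     (\<forall>y\<in>cube_overlap n x - E. \<omega> y = \<omega> (y + x))}"

text \<open>If \<open>\<eta>\<close> lies in both \<open>[A]\<^sup>\<epsilon>\<close> and \<open>\<theta>\<^sub>x[A]\<^sup>\<epsilon>\<close> for the restriction \<open>A\<close> of \<open>\<omega>\<close>, then
  \<open>\<omega> y = A y = \<eta> (y + x) = A (y + x) = \<omega> (y + x)\<close> on the overlap, except at \<open>2 \<epsilon> |C\<^sub>n|\<close> sites.\<close>
lemma not_good_imp_nearly_periodic:
  fixes \<omega> :: "('d::finite) config"
  assumes "\<omega> \<notin> good_set n \<epsilon> \<alpha>"
  obtains x where "x \<noteq> 0" "real_of_int (supnorm x) \<le> \<alpha> * real n"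
    "\<omega> \<in> nearly_periodic n x (2 * \<epsilon> * real (card (cube n :: 'd site set)))"
proof -
  define A where "A y = (if y \<in> cube n then \<omega> y else False)" for y
  define L where "L = real (card (cube n :: 'd site set))"
  obtain x \<eta> where x: "x \<noteq> 0" "real_of_int (supnorm x) \<le> \<alpha> * real n"
    and \<eta>: "\<eta> \<in> cyl n \<epsilon> A" "\<eta> \<in> shifted_cyl n \<epsilon> A x"
    using assms unfolding good_set_def good_pattern_def A_def by blast
  define E1 where "E1 = {y\<in>cube n. \<eta> y \<noteq> A y}"
  define E2 where "E2 = {y\<in>cube n. \<eta> (y + x) \<noteq> A y}"
  define E where "E = cube_overlap n x \<inter> (E2 \<union> (\<lambda>z. z - x) ` E1)"
  have card_E12: "real (card E1) \<le> \<epsilon> * L" "real (card E2) \<le> \<epsilon> * L"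
    using \<eta> unfolding cyl_def shifted_cyl_def E1_def E2_def L_def
    by (simp_all add: Delta_eq_card[OF finite_cube])
  have fin: "finite E1" "finite E2"
    unfolding E1_def E2_def by (rule finite_subset[OF _ finite_cube], blast)+
  have "card E \<le> card (E2 \<union> (\<lambda>z. z - x) ` E1)"
    unfolding E_def using fin by (intro card_mono) auto
  also have "\<dots> \<le> card E2 + card ((\<lambda>z. z - x) ` E1)"
    by (rule card_Un_le)
  also have "\<dots> \<le> card E2 + card E1"
    using card_image_le[OF fin(1)] by simp
  finally have "real (card E) \<le> 2 * \<epsilon> * L"
    using card_E12 by linarith
  moreover have "\<omega> y = \<omega> (y + x)" if "y \<in> cube_overlap n x - E" for y
  proof -
    have "y \<in> cube n" "y + x \<in> cube n" "y \<notin> E2" "y + x \<notin> E1"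
      using that unfolding E_def cube_overlap_def by (auto simp: image_iff)
    then show ?thesis
      unfolding E1_def E2_def A_def by auto
  qed
  ultimately have "\<omega> \<in> nearly_periodic n x (2 * \<epsilon> * L)"
    unfolding nearly_periodic_def E_def by blast
  then show ?thesis
    using that x unfolding L_def by blast
qed

text \<open>For \<open>\<epsilon> |C\<^sub>n| < 1\<close> the sets \<open>[A]\<^sup>\<epsilon>\<close> are single patterns.\<close>
lemma corner_config_good:
  fixes \<omega> :: "('d::finite) config"
  assumes "\<epsilon> * real (card (cube n :: 'd site set)) < 1" "\<alpha> < 1/2"
    and "\<forall>y\<in>cube n. \<omega> y = corner_config n y"
  shows "\<omega> \<in> good_set n \<epsilon> \<alpha>"
proof -
  define A where "A = (\<lambda>y. if y \<in> cube n then \<omega> y else False)"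
  have "cyl n \<epsilon> A \<inter> shifted_cyl n \<epsilon> A x = {}"
    if x: "x \<noteq> 0" "real_of_int (supnorm x) \<le> \<alpha> * real n" for x
  proof (rule ccontr)
    assume "cyl n \<epsilon> A \<inter> shifted_cyl n \<epsilon> A x \<noteq> {}"
    then obtain \<eta> where "\<eta> \<in> cyl n \<epsilon> A" "\<eta> \<in> shifted_cyl n \<epsilon> A x"
      by blast
    then have \<eta>: "\<forall>y\<in>cube n. \<eta> y = A y" "\<forall>y\<in>cube n. \<eta> (y + x) = A y"
      using assms(1) unfolding cyl_def shifted_cyl_def
      by (auto intro!: Delta_less_one_imp_eq[OF finite_cube])
    obtain j where "x $ j \<noteq> 0"
      using x(1) by (metis vec_eq_iff zero_index)
    then have "1 \<le> real_of_int (supnorm x)"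
      using abs_le_supnorm[of x j] by simp
    then have "0 < n"
      using x(2) by (cases n) auto
    then have "\<alpha> * real n < real n"
      using assms(2) by (simp add: mult_less_cancel_right2)
    then have x_lt: "\<bar>x $ i\<bar> < int n" for i
      using abs_le_supnorm[of x i] x(2) by linarith
    obtain c where c: "c \<in> cube n" "c - x \<in> cube n" "corner_config n c" "\<not> corner_config n (c - x)"
      by (rule corner_config_translate_mismatch[OF x(1) x_lt])
    have "\<eta> c"
      using \<eta>(1) c(1,3) assms(3) unfolding A_def by auto
    moreover have "\<not> \<eta> c"
      using \<eta>(2) c(2,4) assms(3) unfolding A_def by force
    ultimately show False
      by blast
  qed
  then show ?thesis
    unfolding good_set_def good_pattern_def A_def by blast
qed

section \<open>Local events\<close>

definition depends_only_on :: "('d::finite) site set \<Rightarrow> 'd config set \<Rightarrow> bool" where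
  "depends_only_on F B \<longleftrightarrow> (\<forall>\<omega> \<omega>'. (\<forall>x\<in>F. \<omega> x = \<omega>' x) \<longrightarrow> (\<omega> \<in> B \<longleftrightarrow> \<omega>' \<in> B))"

lemma depends_only_on_mono: "depends_only_on F B \<Longrightarrow> F \<subseteq> G \<Longrightarrow> depends_only_on G B"
  unfolding depends_only_on_def by (metis subsetD)

lemma space_Omega_space: "space Omega_space = UNIV"
  by (simp add: Omega_space_def space_PiM)

lemma cylinder_in_Omega_space:
  assumes "finite F"
  shows "{\<omega>::('d::finite) config. \<forall>x\<in>F. \<omega> x = p x} \<in> sets Omega_space"
proof -
  have "Measurable.pred Omega_space (\<lambda>\<omega>::'d config. \<forall>x\<in>F. \<omega> x = p x)"
    unfolding Omega_space_def using assms by measurable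
  then show ?thesis by (simp add: pred_def space_Omega_space)
qed

lemma local_event_in_Omega_space:
  fixes B :: "('d::finite) config set"
  assumes "finite F" and "depends_only_on F B"
  shows "B \<in> sets Omega_space"
proof -
  have fin: "finite ((\<lambda>\<omega>. restrict \<omega> F) ` B)"
    by (rule finite_subset[of _ "PiE F (\<lambda>_. UNIV)"]) (auto simp: assms(1) finite_PiE)
  have "B = (\<Union>\<omega>\<in>B. {\<omega>'. \<forall>x\<in>F. \<omega>' x = restrict \<omega> F x})"
  proof (intro equalityI subsetI)
    fix \<omega>' assume "\<omega>' \<in> (\<Union>\<omega>\<in>B. {\<omega>'. \<forall>x\<in>F. \<omega>' x = restrict \<omega> F x})"
    then obtain \<omega> where "\<omega> \<in> B" "\<forall>x\<in>F. \<omega>' x = \<omega> x" by auto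
    then show "\<omega>' \<in> B" using assms(2) unfolding depends_only_on_def by blast
  qed auto
  also have "\<dots> = (\<Union>p\<in>(\<lambda>\<omega>. restrict \<omega> F) ` B. {\<omega>'. \<forall>x\<in>F. \<omega>' x = p x})"
    by simp
  finally have eq: "B = (\<Union>p\<in>(\<lambda>\<omega>. restrict \<omega> F) ` B. {\<omega>'. \<forall>x\<in>F. \<omega>' x = p x})" .
  show ?thesis
    by (subst eq) (rule sets.finite_UN[OF fin cylinder_in_Omega_space[OF assms(1)]])
qed

section \<open>Gibbs measures have finite energy\<close>

definition potential_norm :: "(('d::finite) site set \<Rightarrow> 'd config \<Rightarrow> real) \<Rightarrow> real" where
  "potential_norm \<Phi> = infsum (\<lambda>A. SUP \<omega>. \<bar>\<Phi> A \<omega>\<bar>) {A. finite A \<and> (0::'d site) \<in> A}"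

context
  fixes \<Phi> :: "('d::finite) site set \<Rightarrow> 'd config \<Rightarrow> real"
  assumes \<Phi>: "ti_abs_summable_potential \<Phi>"
begin

lemma abs_potential_le_Sup:
  assumes "finite A"
  shows "\<bar>\<Phi> A \<omega>\<bar> \<le> (SUP \<omega>. \<bar>\<Phi> A \<omega>\<bar>)"
proof (rule cSUP_upper)
  have "\<Phi> A \<omega> = \<Phi> A (\<lambda>x. x \<in> {x\<in>A. \<omega> x})" for \<omega>
    using \<Phi> assms unfolding ti_abs_summable_potential_def by auto
  then have "\<bar>\<Phi> A \<omega>\<bar> \<in> (\<lambda>S. \<bar>\<Phi> A (\<lambda>x. x \<in> S)\<bar>) ` Pow A" for \<omega>
    by (intro image_eqI[where x = "{x\<in>A. \<omega> x}"]) auto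
  then have "range (\<lambda>\<omega>. \<bar>\<Phi> A \<omega>\<bar>) \<subseteq> (\<lambda>S. \<bar>\<Phi> A (\<lambda>x. x \<in> S)\<bar>) ` Pow A"
    by blast
  then show "bdd_above (range (\<lambda>\<omega>. \<bar>\<Phi> A \<omega>\<bar>))"
    by (rule bdd_above_mono[OF bdd_finite(1), rotated]) (use assms in simp)
qed simp

lemma Sup_abs_potential_translate:
  assumes "finite A"
  shows "(SUP \<omega>. \<bar>\<Phi> ((\<lambda>z. z + y) ` A) \<omega>\<bar>) = (SUP \<omega>. \<bar>\<Phi> A \<omega>\<bar>)"
proof -
  have "\<Phi> ((\<lambda>z. z + y) ` A) \<omega> = \<Phi> A (\<lambda>z. \<omega> (z + y))" for \<omega>
    using \<Phi> assms unfolding ti_abs_summable_potential_def by blast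
  then have "range (\<lambda>\<omega>. \<bar>\<Phi> ((\<lambda>z. z + y) ` A) \<omega>\<bar>) = (\<lambda>\<sigma>. \<bar>\<Phi> A \<sigma>\<bar>) ` range (\<lambda>\<omega> z. \<omega> (z + y))"
    by (simp add: image_image)
  also have "range (\<lambda>\<omega> z. \<omega> (z + y)) = (UNIV :: 'd config set)"
    by (rule surjI[where f = "\<lambda>\<sigma> z. \<sigma> (z - y)"]) simp
  finally show ?thesis by simp
qed

lemma abs_hamiltonian_singleton_le: "\<bar>hamiltonian \<Phi> {y} \<omega>\<bar> \<le> potential_norm \<Phi>"
proof -
  define g where "g = (\<lambda>A. SUP \<omega>. \<bar>\<Phi> A \<omega>\<bar>)"
  define S0 where "S0 = {A. finite A \<and> (0::'d site) \<in> A}"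
  define Sy where "Sy = {A. finite A \<and> y \<in> A}"
  have bij: "bij_betw (image (\<lambda>z. z + y)) S0 Sy"
  proof (rule bij_betw_byWitness[where f' = "image (\<lambda>z. z - y)"])
    show "image (\<lambda>z. z + y) ` S0 \<subseteq> Sy"
      unfolding S0_def Sy_def by force
    show "image (\<lambda>z. z - y) ` Sy \<subseteq> S0"
      unfolding S0_def Sy_def by force
  qed (simp_all add: image_image)
  have g_translate: "g ((\<lambda>z. z + y) ` A) = g A" if "A \<in> S0" for A
    using that Sup_abs_potential_translate unfolding g_def S0_def by blast
  have "g summable_on S0"
    using \<Phi> unfolding ti_abs_summable_potential_def g_def S0_def by blast
  moreover have "(\<lambda>A. g ((\<lambda>z. z + y) ` A)) summable_on S0 \<longleftrightarrow> g summable_on S0"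
    by (rule summable_on_cong) (rule g_translate)
  ultimately have g_summable: "g summable_on Sy"
    using summable_on_reindex_bij_betw[OF bij, of g] by blast
  have "infsum (\<lambda>A. g ((\<lambda>z. z + y) ` A)) S0 = infsum g S0"
    by (rule infsum_cong) (rule g_translate)
  then have g_sum: "infsum g Sy = potential_norm \<Phi>"
    unfolding infsum_reindex_bij_betw[OF bij] by (simp add: potential_norm_def g_def S0_def)
  have bound: "norm (\<Phi> A \<omega>) \<le> g A" if "A \<in> Sy" for A
    using that abs_potential_le_Sup unfolding g_def Sy_def by simp
  have abs_summable: "(\<lambda>A. norm (\<Phi> A \<omega>)) summable_on Sy"
    using bound by (intro summable_on_comparison_test[OF g_summable]) auto
  have "{A. finite A \<and> A \<inter> {y} \<noteq> {}} = Sy"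
    unfolding Sy_def by blast
  then have "\<bar>hamiltonian \<Phi> {y} \<omega>\<bar> \<le> infsum (\<lambda>A. norm (\<Phi> A \<omega>)) Sy"
    using norm_infsum_bound[OF abs_summable] unfolding hamiltonian_def by simp
  also have "\<dots> \<le> infsum g Sy"
    using abs_summable g_summable bound by (rule infsum_mono)
  finally show ?thesis unfolding g_sum .
qed

lemma gibbs_kernel_singleton_le:
  assumes "S \<subseteq> {y}"
  shows "gibbs_kernel \<Phi> {y} S \<omega> \<le> 1 - exp (- 2 * potential_norm \<Phi>) / 2"
proof -
  define K where "K = potential_norm \<Phi>"
  define w where "w = (\<lambda>T. exp (- hamiltonian \<Phi> {y} (splice {y} T \<omega>)))"
  define S' where "S' = {y} - S"
  have w_bounds: "0 < w T" "exp (- K) \<le> w T" "w T \<le> exp K" for T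
    using abs_hamiltonian_singleton_le[of y "splice {y} T \<omega>"] unfolding w_def K_def by auto
  have "Pow {y} = {S, S'}" "S \<noteq> S'"
    using assms unfolding S'_def by auto
  then have "gibbs_kernel \<Phi> {y} S \<omega> = w S / (w S + w S')"
    unfolding gibbs_kernel_def w_def by simp
  also have "\<dots> = 1 - w S' / (w S + w S')"
    using w_bounds(1)[of S] w_bounds(1)[of S'] by (simp add: field_simps)
  finally have kernel: "gibbs_kernel \<Phi> {y} S \<omega> = 1 - w S' / (w S + w S')" .
  have "exp (- K) / (2 * exp K) \<le> w S' / (w S + w S')"
    using w_bounds[of S] w_bounds[of S'] by (intro frac_le) auto
  moreover have "exp (- K) / (2 * exp K) = exp (- 2 * K) / 2"
    by (simp add: exp_minus field_simps flip: exp_add)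
  ultimately show ?thesis
    using kernel unfolding K_def by linarith
qed

lemma potential_norm_nonneg: "0 \<le> potential_norm \<Phi>"
  unfolding potential_norm_def
  by (intro infsum_nonneg order_trans[OF abs_ge_zero abs_potential_le_Sup]) auto

text \<open>The DLR equation is an identity of Bochner integrals, and such an integral is \<open>0\<close> for a
  non-integrable integrand; this is why the single-site bound is derived in the form of an upper bound.\<close>
lemma prob_site_le_if_gibbs:
  fixes Q :: "'d config measure"
  assumes gibbs: "is_gibbs_for \<Phi> Q" and B: "B \<in> sets Q" "depends_only_on (- {y}) B"
  shows "measure Q ({\<omega>. \<omega> y = b} \<inter> B) \<le> (1 - exp (- 2 * potential_norm \<Phi>) / 2) * measure Q B"
proof -
  define \<delta> where "\<delta> = exp (- 2 * potential_norm \<Phi>) / 2"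
  define S where "S = (if b then {y} else {})"
  interpret prob_space Q
    using gibbs unfolding is_gibbs_for_def by blast
  have "exp (- 2 * potential_norm \<Phi>) \<le> 1"
    using potential_norm_nonneg by simp
  then have "\<delta> \<le> 1"
    unfolding \<delta>_def by linarith
  have "{\<omega> \<in> space Q. \<forall>x\<in>{y}. \<omega> x = (x \<in> S)} \<inter> B = {\<omega>. \<omega> y = b} \<inter> B"
    using sets.sets_into_space[OF B(1)] unfolding S_def by auto
  moreover have "S \<subseteq> {y}"
    unfolding S_def by simp
  moreover have "\<forall>\<omega> \<omega>'. (\<forall>x. x \<notin> {y} \<longrightarrow> \<omega> x = \<omega>' x) \<longrightarrow> (\<omega> \<in> B \<longleftrightarrow> \<omega>' \<in> B)"
    using B(2) unfolding depends_only_on_def by simp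
  moreover have dlr: "\<And>\<Lambda> S. finite \<Lambda> \<Longrightarrow> S \<subseteq> \<Lambda> \<Longrightarrow>
      (\<forall>\<omega> \<omega>'. (\<forall>x. x \<notin> \<Lambda> \<longrightarrow> \<omega> x = \<omega>' x) \<longrightarrow> (\<omega> \<in> B \<longleftrightarrow> \<omega>' \<in> B)) \<Longrightarrow>
      prob ({\<omega> \<in> space Q. \<forall>x\<in>\<Lambda>. \<omega> x = (x \<in> S)} \<inter> B) =
        (\<integral>\<omega>. indicator B \<omega> * gibbs_kernel \<Phi> \<Lambda> S \<omega> \<partial>Q)"
    using gibbs B(1) unfolding is_gibbs_for_def by blast
  ultimately have "prob ({\<omega>. \<omega> y = b} \<inter> B) = (\<integral>\<omega>. indicator B \<omega> * gibbs_kernel \<Phi> {y} S \<omega> \<partial>Q)"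
    using dlr[of "{y}" S] by simp
  also have "\<dots> \<le> (\<integral>\<omega>. indicator B \<omega> * (1 - \<delta>) \<partial>Q)"
  proof (cases "integrable Q (\<lambda>\<omega>. indicator B \<omega> * gibbs_kernel \<Phi> {y} S \<omega>)")
    case True
    have "integrable Q (\<lambda>\<omega>. indicator B \<omega> * (1 - \<delta>))"
      using B(1) by (intro integrable_mult_left integrable_real_indicator) (auto simp: less_top[symmetric])
    then show ?thesis
      using gibbs_kernel_singleton_le[OF \<open>S \<subseteq> {y}\<close>] unfolding \<delta>_def
      by (intro integral_mono[OF True]) (simp_all add: mult_left_mono)
  next
    case False
    then show ?thesis
      using \<open>\<delta> \<le> 1\<close> by (simp add: not_integrable_integral_eq)
  qed
  also have "\<dots> = (1 - \<delta>) * prob B"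
    using B(1) by simp
  finally show ?thesis
    unfolding \<delta>_def .
qed

end

text \<open>Conditioning is expressed
  through the events \<open>B\<close> that do not depend on \<open>y\<close>.\<close>
locale finite_energy = prob_space Q
  for Q :: "('a::finite) config measure" +
  fixes \<delta> :: real
  assumes sets_eq_Omega_space: "sets Q = sets Omega_space"
    and energy_pos: "0 < \<delta>"
    and prob_site_le:
      "B \<in> sets Q \<Longrightarrow> depends_only_on (- {y}) B \<Longrightarrow>
         prob ({\<omega>. \<omega> y = b} \<inter> B) \<le> (1 - \<delta>) * prob B"

lemma finite_energy_if_gibbs:
  fixes Q :: "('d::finite) config measure"
  assumes \<Phi>: "ti_abs_summable_potential \<Phi>" and gibbs: "is_gibbs_for \<Phi> Q"
  shows "finite_energy Q (exp (- 2 * potential_norm \<Phi>) / 2)"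
proof (intro finite_energy.intro finite_energy_axioms.intro)
  show "prob_space Q" "sets Q = sets Omega_space"
    using gibbs unfolding is_gibbs_for_def by blast+
  show "0 < exp (- 2 * potential_norm \<Phi>) / 2"
    by simp
  show "measure Q ({\<omega>. \<omega> y = b} \<inter> B) \<le> (1 - exp (- 2 * potential_norm \<Phi>) / 2) * measure Q B"
    if "B \<in> sets Q" "depends_only_on (- {y}) B" for B y b
    using prob_site_le_if_gibbs[OF \<Phi> gibbs that] .
qed

context finite_energy
begin

lemma space_eq_UNIV: "space Q = UNIV"
  using sets_eq_imp_space_eq[OF sets_eq_Omega_space] by (simp add: space_Omega_space)

lemma local_event_in_sets: "finite F \<Longrightarrow> depends_only_on F B \<Longrightarrow> B \<in> sets Q"
  using local_event_in_Omega_space sets_eq_Omega_space by blast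

lemma site_event_in_sets: "{\<omega>. \<omega> y = b} \<in> sets Q"
  by (rule local_event_in_sets[of "{y}"]) (auto simp: depends_only_on_def)

lemma prob_site_split:
  assumes "B \<in> sets Q"
  shows "prob ({\<omega>. \<omega> y = b} \<inter> B) + prob ({\<omega>. \<omega> y = (\<not> b)} \<inter> B) = prob B"
proof -
  have "({\<omega>. \<omega> y = b} \<inter> B) \<union> ({\<omega>. \<omega> y = (\<not> b)} \<inter> B) = B"
    by auto
  moreover have "({\<omega>. \<omega> y = b} \<inter> B) \<inter> ({\<omega>. \<omega> y = (\<not> b)} \<inter> B) = {}"
    by auto
  ultimately show ?thesis
    using finite_measure_Union[of "{\<omega>. \<omega> y = b} \<inter> B" "{\<omega>. \<omega> y = (\<not> b)} \<inter> B"]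
      assms site_event_in_sets by auto
qed

lemma prob_site_ge:
  assumes "B \<in> sets Q" "depends_only_on (- {y}) B"
  shows "\<delta> * prob B \<le> prob ({\<omega>. \<omega> y = b} \<inter> B)"
  using prob_site_split[OF assms(1), of y b] prob_site_le[OF assms, of "\<not> b"]
  by (simp add: algebra_simps)

lemma energy_le_half: "\<delta> \<le> 1 / 2"
proof -
  have UNIV: "UNIV \<in> sets Q" "depends_only_on (- {0}) UNIV"
    using sets.top[of Q] by (simp_all add: space_eq_UNIV depends_only_on_def)
  show ?thesis
    using prob_site_ge[OF UNIV, of True] prob_site_le[OF UNIV, of True] prob_space space_eq_UNIV
    by simp
qed

lemma prob_cylinder_ge:
  assumes "finite F"
  shows "\<delta> ^ card F \<le> prob {\<omega>. \<forall>y\<in>F. \<omega> y = A y}"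
  using assms
proof (induction F rule: finite_induct)
  case empty
  then show ?case
    using prob_space space_eq_UNIV by simp
next
  case (insert y F)
  define B where "B = {\<omega>. \<forall>z\<in>F. \<omega> z = A z}"
  have "depends_only_on F B"
    unfolding B_def depends_only_on_def by simp
  then have B: "B \<in> sets Q" "depends_only_on (- {y}) B"
    using insert.hyps by (auto intro: local_event_in_sets depends_only_on_mono)
  have "\<delta> ^ card (insert y F) = \<delta> * \<delta> ^ card F"
    using insert.hyps by simp
  also have "\<dots> \<le> \<delta> * prob B"
    using insert.IH energy_pos unfolding B_def by simp
  also have "\<dots> \<le> prob ({\<omega>. \<omega> y = A y} \<inter> B)"
    by (rule prob_site_ge[OF B])
  also have "{\<omega>. \<omega> y = A y} \<inter> B = {\<omega>. \<forall>z\<in>insert y F. \<omega> z = A z}"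
    unfolding B_def by auto
  finally show ?case .
qed

lemma prob_site_agree_le:
  assumes "B \<in> sets Q" "depends_only_on (- {y}) B" "z \<noteq> y"
  shows "prob ({\<omega>. \<omega> y = \<omega> z} \<inter> B) \<le> (1 - \<delta>) * prob B"
proof -
  define C where "C b = {\<omega>. \<omega> z = b} \<inter> B" for b
  have C: "C b \<in> sets Q" "depends_only_on (- {y}) (C b)" for b
    using assms site_event_in_sets unfolding C_def depends_only_on_def by auto
  have "{\<omega>. \<omega> y = \<omega> z} \<inter> B = ({\<omega>. \<omega> y = True} \<inter> C True) \<union> ({\<omega>. \<omega> y = False} \<inter> C False)"
    unfolding C_def by auto
  then have "prob ({\<omega>. \<omega> y = \<omega> z} \<inter> B)
      \<le> prob ({\<omega>. \<omega> y = True} \<inter> C True) + prob ({\<omega>. \<omega> y = False} \<inter> C False)"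
    by (simp only:) (intro measure_Un_le sets.Int C(1) site_event_in_sets)
  also have "\<dots> \<le> (1 - \<delta>) * (prob (C True) + prob (C False))"
    using add_mono[OF prob_site_le[OF C, of True True] prob_site_le[OF C, of False False]]
    by (simp add: distrib_left)
  also have "prob (C True) + prob (C False) = prob B"
    using prob_site_split[OF assms(1), of z True] unfolding C_def by simp
  finally show ?thesis .
qed

text \<open>Pick \<open>y \<in> F\<close> with \<open>y - x \<notin> F\<close>; then \<open>y\<close> occurs in no other constraint, so the event
  \<open>\<omega> y = \<omega> (y + x)\<close> costs a factor \<open>1 - \<delta>\<close> given all the others.\<close>
lemma prob_translate_agree_le:
  assumes "finite F" "x \<noteq> 0"
  shows "prob {\<omega>. \<forall>y\<in>F. \<omega> y = \<omega> (y + x)} \<le> (1 - \<delta>) ^ card F"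
  using assms(1)
proof (induction "card F" arbitrary: F)
  case 0
  then show ?case
    using prob_le_1 by simp
next
  case (Suc k)
  obtain y where y: "y \<in> F" "y - x \<notin> F"
    using ex_mem_diff_notin[OF Suc.prems _ assms(2)] Suc.hyps(2) by fastforce
  define B where "B = {\<omega> :: 'a config. \<forall>z\<in>F - {y}. \<omega> z = \<omega> (z + x)}"
  have "depends_only_on (F \<union> (\<lambda>z. z + x) ` F) B"
    unfolding B_def depends_only_on_def by auto
  then have B_sets: "B \<in> sets Q"
    using Suc.prems by (intro local_event_in_sets) auto
  have "z \<noteq> y \<and> z + x \<noteq> y" if "z \<in> F - {y}" for z
    using that y(2) by (auto simp flip: eq_diff_eq)
  then have "depends_only_on (- {y}) B"
    unfolding B_def depends_only_on_def by auto
  then have "prob ({\<omega>. \<omega> y = \<omega> (y + x)} \<inter> B) \<le> (1 - \<delta>) * prob B"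
    using B_sets assms(2) by (intro prob_site_agree_le) auto
  also have "\<dots> \<le> (1 - \<delta>) * (1 - \<delta>) ^ k"
  proof (rule mult_left_mono)
    have "card (F - {y}) = k"
      using Suc.hyps(2) Suc.prems y(1) by simp
    then show "prob B \<le> (1 - \<delta>) ^ k"
      using Suc.hyps(1)[of "F - {y}"] Suc.prems unfolding B_def by simp
  qed (use energy_le_half in simp)
  also have "\<dots> = (1 - \<delta>) ^ card F"
    by (simp flip: Suc.hyps(2))
  also have "{\<omega>. \<omega> y = \<omega> (y + x)} \<inter> B = {\<omega>. \<forall>z\<in>F. \<omega> z = \<omega> (z + x)}"
    using y(1) unfolding B_def by auto
  finally show ?case .
qed

end

section \<open>Exponential estimates\<close>

text \<open>A Chernoff-type bound: weighting each set \<open>E\<close> by \<open>t ^ card E \<ge> t powr M\<close> turns the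
  restricted sum into a full binomial sum.\<close>
lemma sum_small_subsets_le:
  fixes t d M :: real
  assumes "finite P" "0 < t" "t \<le> 1" "0 \<le> d"
  shows "(\<Sum>E\<in>{E\<in>Pow P. real (card E) \<le> M}. d ^ card (P - E)) \<le> t powr (- M) * (t + d) ^ card P"
proof -
  have "d ^ card (P - E) \<le> t powr (- M) * (t ^ card E * d ^ card (P - E))"
    if "real (card E) \<le> M" for E
  proof -
    have "1 = t powr 0"
      using assms by simp
    also have "\<dots> \<le> t powr (real (card E) - M)"
      using that assms by (intro powr_mono') auto
    also have "\<dots> = t powr (- M) * t ^ card E"
      using assms by (simp add: powr_realpow[symmetric] powr_add[symmetric])
    finally show ?thesis
      using assms by (metis mult.assoc mult_1 mult_right_mono zero_le_power)
  qed
  then have "(\<Sum>E\<in>{E\<in>Pow P. real (card E) \<le> M}. d ^ card (P - E))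
      \<le> (\<Sum>E\<in>{E\<in>Pow P. real (card E) \<le> M}. t powr (- M) * (t ^ card E * d ^ card (P - E)))"
    by (intro sum_mono) auto
  also have "\<dots> \<le> (\<Sum>E\<in>Pow P. t powr (- M) * (t ^ card E * d ^ card (P - E)))"
    using assms by (intro sum_mono2) auto
  also have "\<dots> = t powr (- M) * (\<Sum>E\<in>Pow P. (\<Prod>_\<in>E. t) * (\<Prod>_\<in>P - E. d))"
    by (simp add: sum_distrib_left)
  also have "(\<Sum>E\<in>Pow P. (\<Prod>_\<in>E. t) * (\<Prod>_\<in>P - E. d)) = (t + d) ^ card P"
    using prod_add[OF assms(1), of "\<lambda>_. t" "\<lambda>_. d"] by simp
  finally show ?thesis .
qed

lemma exp_neg_dominates_linear:
  fixes C \<kappa> L :: real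
  assumes "0 < \<kappa>" "0 < C" "16 * C / \<kappa>\<^sup>2 < L"
  shows "C * L * exp (- \<kappa> * L) < exp (- \<kappa> * L / 2)"
proof -
  have L: "0 < L"
    using assms by (smt (verit) divide_pos_pos zero_less_power)
  have "16 * C < \<kappa>\<^sup>2 * L"
    using assms by (simp add: field_simps)
  then have "C * L < (\<kappa> * L / 4)\<^sup>2"
    using L by (simp add: power2_eq_square field_simps)
  also have "\<dots> \<le> exp (\<kappa> * L / 4) ^ 2"
  proof (rule power_mono)
    show "\<kappa> * L / 4 \<le> exp (\<kappa> * L / 4)"
      using exp_ge_add_one_self[of "\<kappa> * L / 4"] by linarith
  qed (use assms L in simp)
  also have "\<dots> = exp (\<kappa> * L / 2)"
    by (simp flip: exp_of_nat_mult)
  finally have "C * L * exp (- \<kappa> * L) < exp (\<kappa> * L / 2) * exp (- \<kappa> * L)"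
    by (intro mult_strict_right_mono) auto
  also have "\<dots> = exp (- \<kappa> * L / 2)"
    by (simp flip: exp_add)
  finally show ?thesis .
qed

lemma finite_power_le:
  assumes "0 < k"
  shows "finite {n::nat. real ((n + 1) ^ k) \<le> c}"
proof (rule finite_subset)
  show "{n::nat. real ((n + 1) ^ k) \<le> c} \<subseteq> {..nat \<lceil>c\<rceil>}"
  proof
    fix n assume n: "n \<in> {n. real ((n + 1) ^ k) \<le> c}"
    have "n \<le> (n + 1) ^ k"
      using assms by (metis add_leD1 le_add2 less_imp_le_nat self_le_power)
    then have "real n \<le> real ((n + 1) ^ k)"
      by (simp only: of_nat_le_iff)
    then have "real n \<le> c"
      using n by simp
    then have "real_of_int (int n) \<le> real_of_int \<lceil>c\<rceil>"
      using le_of_int_ceiling[of c] by (simp only: of_int_of_nat_eq)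
    then show "n \<in> {..nat \<lceil>c\<rceil>}"
      by simp
  qed
qed simp

lemma finite_exp_bound:
  fixes p f :: "'a \<Rightarrow> real"
  assumes "finite S" "\<And>n. n \<in> S \<Longrightarrow> p n < 1" "\<And>n. 0 \<le> f n"
  shows "\<exists>\<nu>>0. \<forall>n\<in>S. p n < exp (- \<nu> * f n)"
proof -
  define q where "q = Max (insert 0 (p ` S))"
  define F where "F = Max (insert 0 (f ` S))"
  have q: "0 \<le> q" "q < 1" "\<And>n. n \<in> S \<Longrightarrow> p n \<le> q"
    using assms(1,2) unfolding q_def by (auto simp: Max_ge_iff Max_less_iff)
  have F: "0 \<le> F" "\<And>n. n \<in> S \<Longrightarrow> f n \<le> F"
    using assms(1) unfolding F_def by (auto simp: Max_ge_iff)
  define \<nu> where "\<nu> = ln (2 / (1 + q)) / (F + 1)"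
  have "0 < \<nu>"
    using q F(1) unfolding \<nu>_def by (intro divide_pos_pos ln_gt_zero) (simp_all add: field_simps)
  have "p n < exp (- \<nu> * f n)" if "n \<in> S" for n
  proof -
    have "\<nu> * f n \<le> \<nu> * (F + 1)"
      using F(2)[OF that] \<open>0 < \<nu>\<close> by (intro mult_left_mono) auto
    also have "\<dots> = ln (2 / (1 + q))"
      using F(1) unfolding \<nu>_def by simp
    finally have \<nu>_f: "\<nu> * f n \<le> ln (2 / (1 + q))" .
    have "p n < (1 + q) / 2"
      using q(2) q(3)[OF that] by simp
    also have "\<dots> = exp (- ln (2 / (1 + q)))"
      using q(1) by (simp add: exp_minus)
    also have "\<dots> \<le> exp (- \<nu> * f n)"
      using \<nu>_f by simp
    finally show ?thesis .
  qed
  then show ?thesis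
    using \<open>0 < \<nu>\<close> by blast
qed

lemma uniform_exp_bound:
  fixes p f :: "'a \<Rightarrow> real"
  assumes "0 < \<kappa>" "finite S" "\<And>n. n \<in> S \<Longrightarrow> p n < 1"
    and "\<And>n. n \<notin> S \<Longrightarrow> p n < exp (- \<kappa> * f n)" and "\<And>n. 0 \<le> f n"
  shows "\<exists>\<nu>>0. \<forall>n. p n < exp (- \<nu> * f n)"
proof -
  obtain \<nu> where \<nu>: "0 < \<nu>" "\<And>n. n \<in> S \<Longrightarrow> p n < exp (- \<nu> * f n)"
    using finite_exp_bound[where p = p and f = f, OF assms(2,3,5)] by blast
  have "p n < exp (- min \<kappa> \<nu> * f n)" for n
  proof (cases "n \<in> S")
    case True
    then show ?thesis
      using \<nu>(2)[OF True] assms(5)[of n] by (smt (verit) exp_le_cancel_iff min.cobounded2 mult_right_mono)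
  next
    case False
    then show ?thesis
      using assms(4)[OF False] assms(5)[of n] by (smt (verit) exp_le_cancel_iff min.cobounded1 mult_right_mono)
  qed
  then show ?thesis
    using assms(1) \<nu>(1) by (intro exI[of _ "min \<kappa> \<nu>"]) simp
qed

lemma
  fixes \<alpha> :: real
  assumes "\<alpha> \<le> 1/2"
  shows finite_small_shifts: "finite {x::('d::finite) site. x \<noteq> 0 \<and> real_of_int (supnorm x) \<le> \<alpha> * real n}"
    and card_small_shifts_le: "real (card {x::('d::finite) site. x \<noteq> 0 \<and> real_of_int (supnorm x) \<le> \<alpha> * real n})
      \<le> 2 ^ CARD('d) * real (card (cube n :: 'd site set))"
proof -
  let ?X = "{x::'d site. x \<noteq> 0 \<and> real_of_int (supnorm x) \<le> \<alpha> * real n}"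
  have "\<alpha> * real n \<le> 1/2 * real n"
    using assms by (intro mult_right_mono) auto
  then have "\<alpha> * real n \<le> real n"
    by linarith
  then have sub: "?X \<subseteq> {x. supnorm x \<le> int n}"
    by auto
  then show "finite ?X"
    using finite_supnorm_le by (rule finite_subset)
  have "card ?X \<le> (2 * n + 1) ^ CARD('d)"
    using card_mono[OF finite_supnorm_le sub] by (simp add: card_supnorm_le)
  also have "\<dots> \<le> 2 ^ CARD('d) * (n + 1) ^ CARD('d)"
    by (simp add: power_mono flip: power_mult_distrib)
  finally have "real (card ?X) \<le> real (2 ^ CARD('d) * (n + 1) ^ CARD('d))"
    by (simp only: of_nat_le_iff)
  then show "real (card ?X) \<le> 2 ^ CARD('d) * real (card (cube n :: 'd site set))"
    unfolding card_cube by simp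
qed

context finite_energy
begin

lemma good_set_in_sets: "good_set n \<epsilon> \<alpha> \<in> sets Q"
proof (rule local_event_in_sets[OF finite_cube])
  have "(\<lambda>y. if y \<in> cube n then \<omega> y else False) = (\<lambda>y. if y \<in> cube n then \<omega>' y else False)"
    if "\<forall>x\<in>cube n. \<omega> x = \<omega>' x" for \<omega> \<omega>' :: "'a config"
    using that by auto
  then show "depends_only_on (cube n) (good_set n \<epsilon> \<alpha>)"
    unfolding depends_only_on_def good_set_def by simp
qed

lemma nearly_periodic_in_sets: "nearly_periodic n x M \<in> sets Q"
proof (rule local_event_in_sets)
  let ?P = "cube_overlap n x"
  show "finite (?P \<union> (\<lambda>z. z + x) ` ?P)"
    using finite_cube_overlap[of n x] by simp
  show "depends_only_on (?P \<union> (\<lambda>z. z + x) ` ?P) (nearly_periodic n x M)"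
    unfolding nearly_periodic_def depends_only_on_def by (auto 0 3)
qed

lemma prob_nearly_periodic_le:
  assumes "x \<noteq> 0"
  shows "prob (nearly_periodic n x M) \<le> exp (M * ln (2 / \<delta>) - \<delta> / 2 * card (cube_overlap n x))"
proof -
  define P where "P = cube_overlap n x"
  define Small where "Small = {E \<in> Pow P. real (card E) \<le> M}"
  define Ev where "Ev E = {\<omega>::'a config. \<forall>y\<in>P - E. \<omega> y = \<omega> (y + x)}" for E
  have P: "finite P"
    unfolding P_def by (rule finite_cube_overlap)
  have Ev: "Ev E \<in> sets Q" for E
  proof (rule local_event_in_sets)
    show "finite (P \<union> (\<lambda>z. z + x) ` P)"
      using P by simp
    show "depends_only_on (P \<union> (\<lambda>z. z + x) ` P) (Ev E)"
      unfolding Ev_def depends_only_on_def by auto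
  qed
  have "nearly_periodic n x M = (\<Union>E\<in>Small. Ev E)"
    unfolding nearly_periodic_def Small_def Ev_def P_def by auto
  then have "prob (nearly_periodic n x M) \<le> (\<Sum>E\<in>Small. prob (Ev E))"
    using P Ev unfolding Small_def by (simp add: measure_UNION_le)
  also have "\<dots> \<le> (\<Sum>E\<in>Small. (1 - \<delta>) ^ card (P - E))"
    unfolding Ev_def using P by (intro sum_mono prob_translate_agree_le assms) simp
  also have "\<dots> \<le> (\<delta> / 2) powr (- M) * (\<delta> / 2 + (1 - \<delta>)) ^ card P"
    unfolding Small_def using P energy_pos energy_le_half by (intro sum_small_subsets_le) auto
  also have "\<dots> \<le> exp (M * ln (2 / \<delta>)) * exp (- \<delta> / 2 * card P)"
  proof (rule mult_mono)
    show "(\<delta> / 2) powr (- M) \<le> exp (M * ln (2 / \<delta>))"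
      using energy_pos by (simp add: powr_def ln_div algebra_simps)
    have "(\<delta> / 2 + (1 - \<delta>)) ^ card P \<le> exp (- \<delta> / 2) ^ card P"
      using energy_le_half exp_ge_add_one_self[of "- \<delta> / 2"] by (intro power_mono) auto
    then show "(\<delta> / 2 + (1 - \<delta>)) ^ card P \<le> exp (- \<delta> / 2 * card P)"
      by (simp add: mult.commute flip: exp_of_nat_mult)
  qed (use energy_le_half in auto)
  finally show ?thesis
    unfolding P_def by (simp flip: exp_add)
qed

lemma prob_nearly_periodic_short_shift_le:
  fixes \<epsilon> :: real and n :: nat
  defines "\<kappa> \<equiv> \<delta> / 2 ^ (CARD('a) + 2)" and "L \<equiv> real (card (cube n :: 'a site set))"
  assumes "x \<noteq> 0" "\<And>i. 2 * \<bar>x $ i\<bar> \<le> int n" "2 * \<epsilon> * ln (2 / \<delta>) \<le> \<kappa>"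
  shows "prob (nearly_periodic n x (2 * \<epsilon> * L)) \<le> exp (- \<kappa> * L)"
proof -
  have "L / 2 ^ CARD('a) \<le> card (cube_overlap n x)"
    unfolding L_def using assms(4) by (rule card_cube_overlap_ge)
  then have "2 * \<kappa> * L \<le> \<delta> / 2 * card (cube_overlap n x)"
    using energy_pos unfolding \<kappa>_def by (simp add: field_simps power_add)
  moreover have "2 * \<epsilon> * ln (2 / \<delta>) * L \<le> \<kappa> * L"
    using assms(5) unfolding L_def by (intro mult_right_mono) auto
  ultimately have "2 * \<epsilon> * L * ln (2 / \<delta>) - \<delta> / 2 * card (cube_overlap n x) \<le> - \<kappa> * L"
    by (simp add: algebra_simps)
  then have "exp (2 * \<epsilon> * L * ln (2 / \<delta>) - \<delta> / 2 * card (cube_overlap n x)) \<le> exp (- \<kappa> * L)"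
    by simp
  then show ?thesis
    using prob_nearly_periodic_le[OF assms(3), of n "2 * \<epsilon> * L"] by linarith
qed

text \<open>A union bound over the at most \<open>2\<^sup>d |C\<^sub>n|\<close> shifts.\<close>
lemma prob_not_good_le:
  fixes \<alpha> \<epsilon> :: real and n :: nat
  defines "\<kappa> \<equiv> \<delta> / 2 ^ (CARD('a) + 2)" and "L \<equiv> real (card (cube n :: 'a site set))"
  assumes "\<alpha> \<le> 1/2" and "2 * \<epsilon> * ln (2 / \<delta>) \<le> \<kappa>"
  shows "prob (- good_set n \<epsilon> \<alpha>) \<le> 2 ^ CARD('a) * L * exp (- \<kappa> * L)"
proof -
  define X where "X = {x::'a site. x \<noteq> 0 \<and> real_of_int (supnorm x) \<le> \<alpha> * real n}"
  have X: "finite X" "real (card X) \<le> 2 ^ CARD('a) * L"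
    unfolding X_def L_def using finite_small_shifts card_small_shifts_le assms(3) by blast+
  have "prob (nearly_periodic n x (2 * \<epsilon> * L)) \<le> exp (- \<kappa> * L)" if "x \<in> X" for x
    using that assms(3,4) double_abs_le_if_supnorm_le unfolding X_def \<kappa>_def L_def
    by (intro prob_nearly_periodic_short_shift_le) auto
  have "- good_set n \<epsilon> \<alpha> \<subseteq> (\<Union>x\<in>X. nearly_periodic n x (2 * \<epsilon> * L))"
  proof
    fix \<omega> :: "'a config"
    assume "\<omega> \<in> - good_set n \<epsilon> \<alpha>"
    then have "\<omega> \<notin> good_set n \<epsilon> \<alpha>"
      by simp
    then obtain x where "x \<noteq> 0" "real_of_int (supnorm x) \<le> \<alpha> * real n"
      "\<omega> \<in> nearly_periodic n x (2 * \<epsilon> * L)"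
      unfolding L_def by (rule not_good_imp_nearly_periodic)
    then show "\<omega> \<in> (\<Union>x\<in>X. nearly_periodic n x (2 * \<epsilon> * L))"
      unfolding X_def by blast
  qed
  then have "prob (- good_set n \<epsilon> \<alpha>) \<le> prob (\<Union>x\<in>X. nearly_periodic n x (2 * \<epsilon> * L))"
    by (intro finite_measure_mono sets.finite_UN X(1) nearly_periodic_in_sets)
  also have "\<dots> \<le> (\<Sum>x\<in>X. prob (nearly_periodic n x (2 * \<epsilon> * L)))"
    by (intro measure_UNION_le X(1) nearly_periodic_in_sets)
  also have "\<dots> \<le> (\<Sum>x\<in>X. exp (- \<kappa> * L))"
    by (intro sum_mono) fact
  also have "\<dots> \<le> 2 ^ CARD('a) * L * exp (- \<kappa> * L)"
    using X(2) by (simp add: mult_right_mono)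
  finally show ?thesis .
qed

lemma prob_not_good_less_one:
  assumes "\<epsilon> * real (card (cube n :: 'a site set)) < 1" "\<alpha> < 1/2"
  shows "prob (- good_set n \<epsilon> \<alpha>) < 1"
proof -
  have "0 < \<delta> ^ card (cube n :: 'a site set)"
    using energy_pos by simp
  also have "\<dots> \<le> prob {\<omega>. \<forall>y\<in>cube n. \<omega> y = corner_config n y}"
    by (rule prob_cylinder_ge[OF finite_cube])
  also have "\<dots> \<le> prob (good_set n \<epsilon> \<alpha>)"
    using assms corner_config_good good_set_in_sets by (intro finite_measure_mono) auto
  finally show ?thesis
    using prob_compl[OF good_set_in_sets] by (simp add: space_eq_UNIV Compl_eq_Diff_UNIV)
qed

lemma prob_not_good_less_exp:
  fixes \<alpha> \<epsilon> :: real and n :: nat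
  defines "\<kappa> \<equiv> \<delta> / 2 ^ (CARD('a) + 2)"
  assumes "\<alpha> \<le> 1/2" "2 * \<epsilon> * ln (2 / \<delta>) \<le> \<kappa>"
    and "16 * 2 ^ CARD('a) / \<kappa>\<^sup>2 < real ((n + 1) ^ CARD('a))"
  shows "prob (- good_set n \<epsilon> \<alpha>) < exp (- (\<kappa> / 2) * real n ^ CARD('a))"
proof -
  define L where "L = real (card (cube n :: 'a site set))"
  have L: "L = real ((n + 1) ^ CARD('a))"
    unfolding L_def card_cube ..
  have "prob (- good_set n \<epsilon> \<alpha>) \<le> 2 ^ CARD('a) * L * exp (- \<kappa> * L)"
    using assms(2,3) unfolding L_def \<kappa>_def by (rule prob_not_good_le)
  also have "\<dots> < exp (- \<kappa> * L / 2)"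
    using energy_pos assms(4) unfolding L \<kappa>_def by (intro exp_neg_dominates_linear) auto
  also have "\<dots> \<le> exp (- (\<kappa> / 2) * real n ^ CARD('a))"
  proof -
    have "\<kappa> / 2 * real n ^ CARD('a) \<le> \<kappa> / 2 * L"
      using energy_pos unfolding L \<kappa>_def by (intro mult_left_mono) (simp_all add: power_mono)
    then show ?thesis
      by simp
  qed
  finally show ?thesis .
qed

lemma ex_exp_bound_prob_not_good:
  fixes \<alpha> \<epsilon> :: real
  defines "\<kappa> \<equiv> \<delta> / 2 ^ (CARD('a) + 2)"
  defines "L0 \<equiv> 16 * 2 ^ CARD('a) / \<kappa>\<^sup>2"
  assumes "\<alpha> < 1/2" "2 * \<epsilon> * ln (2 / \<delta>) \<le> \<kappa>" "\<epsilon> * (L0 + 1) < 1"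
  shows "\<exists>\<nu>>0. \<forall>n. prob (- good_set n \<epsilon> \<alpha>) < exp (- \<nu> * real n ^ CARD('a))"
proof (rule uniform_exp_bound)
  define S where "S = {n. real ((n + 1) ^ CARD('a)) \<le> L0}"
  show "finite S"
    unfolding S_def by (rule finite_power_le) simp
  show "prob (- good_set n \<epsilon> \<alpha>) < 1" if "n \<in> S" for n
  proof (rule prob_not_good_less_one[OF _ assms(3)])
    have L: "real (card (cube n :: 'a site set)) \<le> L0"
      using that unfolding S_def card_cube by simp
    show "\<epsilon> * real (card (cube n :: 'a site set)) < 1"
    proof (cases "0 \<le> \<epsilon>")
      case True
      then have "\<epsilon> * real (card (cube n :: 'a site set)) \<le> \<epsilon> * (L0 + 1)"
        using L by (intro mult_left_mono) auto
      then show ?thesis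
        using assms(5) by linarith
    next
      case False
      then have "\<epsilon> * real (card (cube n :: 'a site set)) \<le> 0"
        by (intro mult_nonpos_nonneg) auto
      then show ?thesis
        by linarith
    qed
  qed
  show "prob (- good_set n \<epsilon> \<alpha>) < exp (- (\<kappa> / 2) * real n ^ CARD('a))" if "n \<notin> S" for n
    using that assms(3,4) unfolding S_def L0_def \<kappa>_def by (intro prob_not_good_less_exp) auto
qed (use energy_pos in \<open>auto simp: \<kappa>_def\<close>)

theorem good_set_exp_bound:
  fixes \<alpha> :: real
  assumes "\<alpha> < 1/2"
  shows "\<exists>\<epsilon>0>0. \<forall>\<epsilon><\<epsilon>0. \<exists>\<nu>>0. \<forall>n. 1 - exp (- \<nu> * real n ^ CARD('a)) < prob (good_set n \<epsilon> \<alpha>)"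
proof -
  define \<kappa> where "\<kappa> = \<delta> / 2 ^ (CARD('a) + 2)"
  define L0 where "L0 = 16 * 2 ^ CARD('a) / \<kappa>\<^sup>2"
  have \<kappa>: "0 < \<kappa>" and L0: "0 < L0" and ln: "0 < ln (2 / \<delta>)"
    using energy_pos energy_le_half unfolding \<kappa>_def L0_def by (auto intro: ln_gt_zero)
  define \<epsilon>0 where "\<epsilon>0 = min (\<kappa> / (2 * ln (2 / \<delta>))) (1 / (L0 + 1))"
  have "\<exists>\<nu>>0. \<forall>n. 1 - exp (- \<nu> * real n ^ CARD('a)) < prob (good_set n \<epsilon> \<alpha>)"
    if "\<epsilon> < \<epsilon>0" for \<epsilon>
  proof -
    have "2 * \<epsilon> * ln (2 / \<delta>) \<le> \<kappa>" "\<epsilon> * (L0 + 1) < 1"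
      using that ln L0 unfolding \<epsilon>0_def by (simp_all add: field_simps)
    then obtain \<nu> where "0 < \<nu>" "\<And>n. prob (- good_set n \<epsilon> \<alpha>) < exp (- \<nu> * real n ^ CARD('a))"
      using ex_exp_bound_prob_not_good[OF assms] unfolding \<kappa>_def L0_def by blast
    moreover have "prob (- good_set n \<epsilon> \<alpha>) = 1 - prob (good_set n \<epsilon> \<alpha>)" for n
      using prob_compl[OF good_set_in_sets] by (simp add: space_eq_UNIV Compl_eq_Diff_UNIV)
    ultimately show ?thesis
      by (intro exI[of _ \<nu>]) (auto simp: algebra_simps)
  qed
  moreover have "0 < \<epsilon>0"
    using \<kappa> L0 ln unfolding \<epsilon>0_def by simp
  ultimately show ?thesis
    by blast
qed

end

theorem proposition2p7:
  fixes Q :: "('d::finite) config measure"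
  assumes "CARD('d) \<ge> 2"
    and "stationary_gibbs Q"
  shows "\<forall>\<alpha>::real. 0 < \<alpha> \<and> \<alpha> < 1/2 \<longrightarrow>
           (\<exists>\<epsilon>0>0. \<forall>\<epsilon>::real. 0 < \<epsilon> \<and> \<epsilon> < \<epsilon>0 \<longrightarrow>
              (\<exists>\<nu>>0. \<forall>n::nat. n \<ge> 1 \<longrightarrow>
                 measure Q (good_set n \<epsilon> \<alpha>) > 1 - exp (- \<nu> * real n ^ CARD('d))))"
proof -
  obtain \<Phi> where "ti_abs_summable_potential \<Phi>" "is_gibbs_for \<Phi> Q"
    using assms(2) unfolding stationary_gibbs_def by blast
  then interpret finite_energy Q "exp (- 2 * potential_norm \<Phi>) / 2"
    by (rule finite_energy_if_gibbs)
  show ?thesis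
    using good_set_exp_bound by fastforce
qed

end
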